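(* Every sequential Thiele rule whose scoring function is not of the form $s(x)=\alpha x$ (i.e., every sequential Thiele rule other than approval voting), sequential Phragmén, and the method of equal shares fail participation: for each of these rules $f$ there exist a finite candidate set $C$, a committee size $k$, a profile $A$ on $C$ with $|N_A|\ge 2$ and a voter $i\in N_A$ with $f(A_{-i},k)\succ_i f(A,k)$.
   Context: Candidates form a finite set $C$, $|C|=m>1$. An approval profile $A$ has a nonempty finite voter set $N_A$, each $i\in N_A$ having a nonempty ballot $A_i\subseteq C$; $N_A(c)=\{i\in N_A:c\in A_i\}$, $n=|N_A|$, $A_{-i}$ is $A$ with voter $i$ removed. Committees of size $k\in\{1,\dots,m-1\}$ are $k$-subsets of $C$. Preferences: $W\succsim_i W'$ iff $|W\cap A_i|\ge|W'\cap A_i|$, $W\succ_i W'$ iff $>$. Kelly's extension: $X\succsim_i Y$ iff $W\succsim_i W'$ for all $W\in X,W'\in Y$; $X\succ_i Y$ iff $X\succsim_i Y$ and $W\succ_i W'$ for some $W\in X,W'\in Y$. All rules below build a committee by sequentially adding candidates and return every committee obtainable under some tie-breaking (every choice among tied candidates). Sequential Thiele rule: given $s:\mathbb N_0\to\mathbb Q$ with $s(0)=0$, $s(1)>0$, $s$ nondecreasing and concave ($s(x+1)-s(x)\ge s(x+2)-s(x+1)$), with $\hat s(A,W)=\sum_{i\in N_A}s(|A_i\cap W|)$; having chosen $c_1,\dots,c_\ell$, the next candidate is any $x\in C\setminus\{c_1,\dots,c_\ell\}$ maximizing $\hat s(A,\{c_1,\dots,c_\ell,x\})$. Sequential Phragmén: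 set $y_0(i)=0$ for all voters. In round $r$, with $c_1,\dots,c_{r-1}$ chosen, each unchosen $c$ has load $\ell_r(c)=\bigl(1+\sum_{i\in N_A(c)}y_{r-1}(i)\bigr)/|N_A(c)|$ ($+\infty$ if $N_A(c)=\emptyset$); any $c_r$ minimizing $\ell_r$ is chosen, and $y_r(i)=\ell_r(c_r)$ for $i\in N_A(c_r)$, $y_r(i)=y_{r-1}(i)$ otherwise. Method of equal shares (MES): each voter starts with budget $x_0(i)=k/n$; every candidate costs 1. Phase 1: with budgets $x_r$ after buying $r$ candidates, let $C_r$ be the unchosen candidates $c$ with $\sum_{i\in N_A(c)}x_r(i)\ge1$; if $C_r\neq\emptyset$, buy any $c\in C_r$ minimizing $\rho(c)$, where $\sum_{i\in N_A(c)}\min(\rho(c),x_r(i))=1$, and set $x_{r+1}(i)=x_r(i)-\min(\rho(c),x_r(i))$ for $i\in N_A(c)$, $x_{r+1}(i)=x_r(i)$ otherwise; stop when $C_r=\emptyset$. Phase 2 (if fewer than $k$ bought): starting from the remaining budgets, all voters' budgets increase continuously at unit rate; as soon as the supporters $N_A(c)$ of some unchosen $c$ have total budget 1, such a $c$ (any, in case of ties) is bought and the budgets of its supporters are reset to 0; continue until $k$ candidates are bought. *)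

theory Defs
  imports Complex_Main
begin

text \<open>A profile on candidate set C is given by a voter set N and ballots A.
  Removing voter i gives the profile (N - {i}, A).\<close>

definition supporters :: "'v set \<Rightarrow> ('v \<Rightarrow> 'c set) \<Rightarrow> 'c \<Rightarrow> 'v set" where
  "supporters N A c = {i \<in> N. c \<in> A i}"

definition is_profile :: "'c set \<Rightarrow> 'v set \<Rightarrow> ('v \<Rightarrow> 'c set) \<Rightarrow> bool" where
  "is_profile C N A \<longleftrightarrow> finite N \<and> N \<noteq> {} \<and> (\<forall>i\<in>N. A i \<noteq> {} \<and> A i \<subseteq> C)"

definition kelly_strict :: "'c set \<Rightarrow> 'c set set \<Rightarrow> 'c set set \<Rightarrow> bool" where
  "kelly_strict B X Y \<longleftrightarrow>
     (\<forall>W\<in>X. \<forall>W'\<in>Y. card (W' \<inter> B) \<le> card (W \<inter> B)) \<and>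
     (\<exists>W\<in>X. \<exists>W'\<in>Y. card (W' \<inter> B) < card (W \<inter> B))"

definition thiele_score :: "(nat \<Rightarrow> rat) \<Rightarrow> 'v set \<Rightarrow> ('v \<Rightarrow> 'c set) \<Rightarrow> 'c set \<Rightarrow> rat" where
  "thiele_score s N A W = (\<Sum>i\<in>N. s (card (A i \<inter> W)))"

inductive thiele_partial :: "(nat \<Rightarrow> rat) \<Rightarrow> 'c set \<Rightarrow> 'v set \<Rightarrow> ('v \<Rightarrow> 'c set) \<Rightarrow> 'c set \<Rightarrow> bool"
  for s C N A where
  thiele_init: "thiele_partial s C N A {}"
| thiele_step: "thiele_partial s C N A W \<Longrightarrow> x \<in> C - W \<Longrightarrow>
    (\<forall>y\<in>C - W. thiele_score s N A (insert y W) \<le> thiele_score s N A (insert x W)) \<Longrightarrow>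
    thiele_partial s C N A (insert x W)"

definition seq_thiele :: "(nat \<Rightarrow> rat) \<Rightarrow> 'c set \<Rightarrow> 'v set \<Rightarrow> ('v \<Rightarrow> 'c set) \<Rightarrow> nat \<Rightarrow> 'c set set" where
  "seq_thiele s C N A k = {W. thiele_partial s C N A W \<and> card W = k}"

definition phrag_load :: "'v set \<Rightarrow> ('v \<Rightarrow> 'c set) \<Rightarrow> ('v \<Rightarrow> real) \<Rightarrow> 'c \<Rightarrow> real" where
  "phrag_load N A y c =
     (1 + (\<Sum>i\<in>supporters N A c. y i)) / real (card (supporters N A c))"

text \<open>Candidates without supporters have load +infinity: they are never strictly
  preferred and can only be chosen when every unchosen candidate lacks supporters.\<close>

inductive phrag_partial :: "'c set \<Rightarrow> 'v set \<Rightarrow> ('v \<Rightarrow> 'c set) \<Rightarrow> 'c set \<Rightarrow> ('v \<Rightarrow> real) \<Rightarrow> bool"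
  for C N A where
  phrag_init: "phrag_partial C N A {} (\<lambda>_. 0)"
| phrag_step: "phrag_partial C N A W y \<Longrightarrow> x \<in> C - W \<Longrightarrow>
    (\<forall>c\<in>C - W. supporters N A c \<noteq> {} \<longrightarrow>
        supporters N A x \<noteq> {} \<and> phrag_load N A y x \<le> phrag_load N A y c) \<Longrightarrow>
    phrag_partial C N A (insert x W)
      (\<lambda>i. if i \<in> supporters N A x then phrag_load N A y x else y i)"

definition seq_phragmen :: "'c set \<Rightarrow> 'v set \<Rightarrow> ('v \<Rightarrow> 'c set) \<Rightarrow> nat \<Rightarrow> 'c set set" where
  "seq_phragmen C N A k = {W. \<exists>y. phrag_partial C N A W y \<and> card W = k}"

definition mes_affordable :: "'v set \<Rightarrow> ('v \<Rightarrow> 'c set) \<Rightarrow> ('v \<Rightarrow> real) \<Rightarrow> 'c \<Rightarrow> bool" where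
  "mes_affordable N A x c \<longleftrightarrow> 1 \<le> (\<Sum>i\<in>supporters N A c. x i)"

definition mes_rho :: "('v \<Rightarrow> real) \<Rightarrow> 'v set \<Rightarrow> real" where
  "mes_rho x S = Inf {r. 0 \<le> r \<and> (\<Sum>i\<in>S. min r (x i)) = 1}"

text \<open>Phase 2: time until the supporters of c (budgets growing at unit rate) hold total budget 1.\<close>

definition mes_time :: "'v set \<Rightarrow> ('v \<Rightarrow> 'c set) \<Rightarrow> ('v \<Rightarrow> real) \<Rightarrow> 'c \<Rightarrow> real" where
  "mes_time N A x c =
     (1 - (\<Sum>i\<in>supporters N A c. x i)) / real (card (supporters N A c))"

text \<open>States: chosen set, budgets, and a flag telling whether phase 2 has started.\<close>

inductive mes_partial :: "'c set \<Rightarrow> 'v set \<Rightarrow> ('v \<Rightarrow> 'c set) \<Rightarrow> nat \<Rightarrow>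
    'c set \<Rightarrow> ('v \<Rightarrow> real) \<Rightarrow> bool \<Rightarrow> bool"
  for C N A k where
  mes_init: "mes_partial C N A k {} (\<lambda>_. real k / real (card N)) False"
| mes_phase1: "mes_partial C N A k W x False \<Longrightarrow> c \<in> C - W \<Longrightarrow>
    mes_affordable N A x c \<Longrightarrow>
    (\<forall>d\<in>C - W. mes_affordable N A x d \<longrightarrow>
        mes_rho x (supporters N A c) \<le> mes_rho x (supporters N A d)) \<Longrightarrow>
    mes_partial C N A k (insert c W)
      (\<lambda>i. if i \<in> supporters N A c then x i - min (mes_rho x (supporters N A c)) (x i) else x i)
      False"
| mes_switch: "mes_partial C N A k W x False \<Longrightarrow>
    (\<forall>d\<in>C - W. \<not> mes_affordable N A x d) \<Longrightarrow>
    mes_partial C N A k W x True"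
| mes_phase2: "mes_partial C N A k W x True \<Longrightarrow> c \<in> C - W \<Longrightarrow>
    supporters N A c \<noteq> {} \<Longrightarrow>
    (\<forall>d\<in>C - W. supporters N A d \<noteq> {} \<longrightarrow> mes_time N A x c \<le> mes_time N A x d) \<Longrightarrow>
    mes_partial C N A k (insert c W)
      (\<lambda>i. if i \<in> supporters N A c then 0 else x i + mes_time N A x c)
      True"

definition equal_shares :: "'c set \<Rightarrow> 'v set \<Rightarrow> ('v \<Rightarrow> 'c set) \<Rightarrow> nat \<Rightarrow> 'c set set" where
  "equal_shares C N A k = {W. \<exists>x b. mes_partial C N A k W x b \<and> card W = k}"

definition fails_participation ::
    "('c set \<Rightarrow> 'v set \<Rightarrow> ('v \<Rightarrow> 'c set) \<Rightarrow> nat \<Rightarrow> 'c set set) \<Rightarrow> bool" where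
  "fails_participation f \<longleftrightarrow>
     (\<exists>C N A k i. finite C \<and> 1 < card C \<and> 1 \<le> k \<and> k < card C \<and>
        is_profile C N A \<and> 2 \<le> card N \<and> i \<in> N \<and>
        kelly_strict (A i) (f C (N - {i}) A k) (f C N A k))"

end

theory Submission
  imports Defs
begin

(*
  Voter 0 is hurt by participating: without her each rule elects only committees containing
  her whole ballot, with her it can elect one that misses part of it. For sequential Phragmen
  and equal shares a small explicit profile does this. For a Thiele rule whose concave score s
  is not linear, let s be linear up to p + 1 and s (p + 2) = s (p + 1) + b with b < s 1.
  Padding the election with p candidates approved by everybody, which are elected first,
  brings every voter to this kink, so the greedy choices among five core candidates depend
  only on s 1 and b; taking the voter blocks of size about g \<ge> s 1 / (s 1 - b) makes the
  discount b decisive in every round.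
*)

lemma kelly_strict_if_ballot_covered:
  assumes "finite B" and "\<forall>W\<in>X. B \<subseteq> W" and "W\<^sub>0 \<in> X" and "W' \<in> Y" and "\<not> B \<subseteq> W'"
  shows "kelly_strict B X Y"
  unfolding kelly_strict_def
proof (intro conjI ballI)
  fix W W' assume "W \<in> X"
  then have "card (W' \<inter> B) \<le> card B" "W \<inter> B = B"
    using assms(1,2) by (auto intro: card_mono)
  then show "card (W' \<inter> B) \<le> card (W \<inter> B)" by simp
next
  have "W' \<inter> B \<subset> B" using assms(5) by blast
  then have "card (W' \<inter> B) < card (W\<^sub>0 \<inter> B)"
    using assms(1-3) by (simp add: Int_absorb1 psubset_card_mono)
  with assms(3,4) show "\<exists>W\<in>X. \<exists>W'\<in>Y. card (W' \<inter> B) < card (W \<inter> B)" by blast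
qed

lemma fails_participationI:
  assumes "finite C" "1 < card C" "1 \<le> k" "k < card C"
    and "is_profile C N A" "2 \<le> card N" "i \<in> N"
    and "\<forall>W\<in>f C (N - {i}) A k. A i \<subseteq> W"
    and "W\<^sub>0 \<in> f C (N - {i}) A k" "W' \<in> f C N A k" "\<not> A i \<subseteq> W'"
  shows "fails_participation f"
proof -
  have "finite (A i)" using assms(1,5,7) unfolding is_profile_def by (meson finite_subset)
  then have "kelly_strict (A i) (f C (N - {i}) A k) (f C N A k)"
    using assms(8-11) by (rule kelly_strict_if_ballot_covered)
  with assms(1-7) show ?thesis unfolding fails_participation_def by blast
qed

lemma supporters_empty [simp]: "supporters {} A c = {}"
  by (simp add: supporters_def)

lemma supporters_insert [simp]:
  "supporters (insert i N) A c = (if c \<in> A i then insert i (supporters N A c) else supporters N A c)"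
  by (auto simp: supporters_def)

section \<open>Sequential Thiele rules\<close>

lemma concave_increment_le_first:
  fixes s :: "nat \<Rightarrow> rat"
  assumes "\<forall>x. s (x + 2) - s (x + 1) \<le> s (x + 1) - s x"
  shows "s (j + 1) - s j \<le> s 1 - s 0"
proof (induction j)
  case (Suc j)
  have "s (j + 2) - s (j + 1) \<le> s (j + 1) - s j" using assms by blast
  with Suc show ?case by (simp add: numeral_2_eq_2)
qed simp

lemma concave_score_first_kink:
  fixes s :: "nat \<Rightarrow> rat"
  assumes s0: "s 0 = 0" and mono: "mono s"
    and concave: "\<forall>x. s (x + 2) - s (x + 1) \<le> s (x + 1) - s x"
    and nonlinear: "\<not> (\<exists>\<alpha>. \<forall>x. s x = \<alpha> * of_nat x)"
  obtains p b where "\<forall>j\<le>p+1. s j = of_nat j * s 1" "s (p + 2) = s (p + 1) + b"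
    "0 \<le> b" "b < s 1"
proof -
  have increment_le: "s (j + 1) - s j \<le> s 1" for j
    using concave_increment_le_first[OF concave, of j] s0 by simp
  have "\<exists>j. s (j + 1) - s j < s 1"
  proof (rule ccontr)
    assume "\<not> ?thesis"
    then have increment_ge: "s 1 \<le> s (j + 1) - s j" for j by (simp add: not_less)
    have step: "s (j + 1) = s j + s 1" for j using increment_le[of j] increment_ge[of j] by linarith
    have "s x = s 1 * of_nat x" for x
    proof (induction x)
      case (Suc x)
      then show ?case using step[of x] by (simp add: algebra_simps)
    qed (simp add: s0)
    with nonlinear show False by blast
  qed
  define t where "t = (LEAST j. s (j + 1) - s j < s 1)"
  have kink: "s (t + 1) - s t < s 1"
    unfolding t_def by (rule LeastI_ex) fact
  have before_kink: "s (j + 1) = s j + s 1" if "j < t" for j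
    using not_less_Least[OF that[unfolded t_def]] increment_le[of j] by simp
  have linear: "s j = of_nat j * s 1" if "j \<le> t" for j
    using that
  proof (induction j)
    case (Suc j)
    then show ?case using before_kink[of j] by (simp add: algebra_simps)
  qed (simp add: s0)
  have "t \<noteq> 0" using kink s0 by (cases t) auto
  then obtain p where t: "t = p + 1" by (metis Suc_eq_plus1 not0_implies_Suc)
  show ?thesis
  proof (rule that[of p "s (t + 1) - s t"])
    show "s (p + 2) = s (p + 1) + (s (t + 1) - s t)" by (simp add: t numeral_2_eq_2)
    show "0 \<le> s (t + 1) - s t" using mono by (simp add: mono_def)
    show "\<forall>j\<le>p+1. s j = of_nat j * s 1" using linear unfolding t by blast
    show "s (t + 1) - s t < s 1" by (fact kink)
  qed
qed

lemma thiele_partial_subset: "thiele_partial s C N A W \<Longrightarrow> W \<subseteq> C"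
  by (induction rule: thiele_partial.induct) auto

lemma thiele_partial_commonly_approved:
  fixes s :: "nat \<Rightarrow> rat"
  assumes "mono s" and "finite Q" and "Q \<subseteq> C" and "\<forall>i\<in>N. Q \<subseteq> A i"
  shows "thiele_partial s C N A Q"
  using assms(2-4)
proof (induction rule: finite_induct)
  case empty
  show ?case by (rule thiele_init)
next
  case (insert q F)
  have "thiele_score s N A (insert y F) \<le> thiele_score s N A (insert q F)" for y
    unfolding thiele_score_def
  proof (rule sum_mono)
    fix i assume "i \<in> N"
    then have "A i \<inter> insert q F = insert q F" using insert.prems by auto
    moreover have "card (A i \<inter> insert y F) \<le> card (insert y F)"
      using insert.hyps by (intro card_mono) auto
    moreover have "card (insert y F) \<le> card (insert q F)"
      using insert.hyps by (simp add: card_insert_if)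
    ultimately show "s (card (A i \<inter> insert y F)) \<le> s (card (A i \<inter> insert q F))"
      using \<open>mono s\<close> by (simp add: monoD)
  qed
  with insert show ?case using thiele_step[of s C N A F q] by auto
qed

definition padding :: "nat \<Rightarrow> nat set" where
  "padding p = {5..<5+p}"

definition core_ballot :: "nat \<Rightarrow> nat \<Rightarrow> nat set" where
  "core_ballot g v =
     (if v < 1 then {0,1} else if v < 1+g then {0,2} else if v < 3*g+2 then {0}
      else if v < 6*g+2 then {1} else if v < 7*g+3 then {2,3} else if v < 8*g+4 then {2,4}
      else if v < 10*g+4 then {3} else {4})"

definition thiele_ballot :: "nat \<Rightarrow> nat \<Rightarrow> nat \<Rightarrow> nat set" where
  "thiele_ballot p g v = padding p \<union> core_ballot g v"

lemma less_5_cases: "(y :: nat) < 5 \<Longrightarrow> y \<in> {0,1,2,3,4}"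
  by auto

lemma card_padding [simp]: "card (padding p) = p"
  by (simp add: padding_def)

lemma finite_padding [simp]: "finite (padding p)"
  by (simp add: padding_def)

lemma card_padding_Un: "E \<subseteq> {0..<5} \<Longrightarrow> card (padding p \<union> E) = p + card E"
  by (subst card_Un_disjoint) (auto simp: padding_def intro: finite_subset)

lemma core_ballot_subset: "core_ballot g v \<subseteq> {0..<5}"
  by (auto simp: core_ballot_def)

lemma sum_constant_block:
  assumes "\<And>v. lo \<le> v \<Longrightarrow> v < hi \<Longrightarrow> h v = c"
  shows "(\<Sum>v\<in>{lo..<hi}. h v) = of_nat (hi - lo) * (c :: 'a :: semiring_1)"
  using assms by simp

lemma sum_core_ballots_from_1:
  fixes f :: "nat set \<Rightarrow> rat"
  shows "(\<Sum>v\<in>{1..<12*g+4}. f (core_ballot g v)) =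
     of_nat g * f {0,2} + of_nat (2*g+1) * f {0} + of_nat (3*g) * f {1}
     + of_nat (g+1) * f {2,3} + of_nat (g+1) * f {2,4} + of_nat (2*g) * f {3} + of_nat (2*g) * f {4}"
proof -
  let ?h = "\<lambda>v. f (core_ballot g v)"
  have split: "sum ?h {1..<12*g+4} = sum ?h {1..<1+g} + sum ?h {1+g..<3*g+2}
      + sum ?h {3*g+2..<6*g+2} + sum ?h {6*g+2..<7*g+3} + sum ?h {7*g+3..<8*g+4}
      + sum ?h {8*g+4..<10*g+4} + sum ?h {10*g+4..<12*g+4}"
    by (subst sum.atLeastLessThan_concat, linarith, linarith)+ (rule refl)
  show ?thesis
    unfolding split by (subst sum_constant_block, simp add: core_ballot_def)+ simp
qed

lemma thiele_score_insert_voter: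
  "finite N \<Longrightarrow> i \<notin> N \<Longrightarrow>
    thiele_score s (insert i N) A W = s (card (A i \<inter> W)) + thiele_score s N A W"
  by (simp add: thiele_score_def)

lemma thiele_score_padding_core:
  assumes "Q \<subseteq> padding p" and "E \<subseteq> {0..<5}"
  shows "thiele_score s N (thiele_ballot p g) (Q \<union> E) =
    (\<Sum>v\<in>N. s (card Q + card (core_ballot g v \<inter> E)))"
proof -
  have "thiele_ballot p g v \<inter> (Q \<union> E) = Q \<union> (core_ballot g v \<inter> E)" for v
    using assms core_ballot_subset[of g v] by (auto simp: thiele_ballot_def padding_def)
  moreover have "card (Q \<union> (core_ballot g v \<inter> E)) = card Q + card (core_ballot g v \<inter> E)" for v
  proof (rule card_Un_disjoint)
    show "finite Q" using assms(1) by (rule finite_subset) simp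
    show "Q \<inter> (core_ballot g v \<inter> E) = {}"
      using assms(1) core_ballot_subset[of g v] by (fastforce simp: padding_def)
  qed (simp add: core_ballot_def)
  ultimately show ?thesis by (simp add: thiele_score_def)
qed

lemma thiele_partial_padding_insert:
  assumes "thiele_partial s {0..<5+p} N A (padding p \<union> E)" and "x < 5" "x \<notin> E"
    and "\<And>y. y < 5 \<Longrightarrow> y \<notin> E \<Longrightarrow>
      thiele_score s N A (padding p \<union> insert y E) \<le> thiele_score s N A (padding p \<union> insert x E)"
  shows "thiele_partial s {0..<5+p} N A (padding p \<union> insert x E)"
proof -
  have "thiele_partial s {0..<5+p} N A (insert x (padding p \<union> E))"
  proof (rule thiele_step[OF assms(1)])
    show "x \<in> {0..<5+p} - (padding p \<union> E)" using assms(2,3) by (auto simp: padding_def)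
    show "\<forall>y\<in>{0..<5+p} - (padding p \<union> E). thiele_score s N A (insert y (padding p \<union> E))
        \<le> thiele_score s N A (insert x (padding p \<union> E))"
    proof
      fix y assume "y \<in> {0..<5+p} - (padding p \<union> E)"
      then have "y < 5" "y \<notin> E" by (auto simp: padding_def)
      from assms(4)[OF this] show "thiele_score s N A (insert y (padding p \<union> E))
        \<le> thiele_score s N A (insert x (padding p \<union> E))" by simp
    qed
  qed
  then show ?thesis by simp
qed

context
  fixes s :: "nat \<Rightarrow> rat" and p g :: nat and a b :: rat
  assumes linear: "\<forall>j\<le>p+1. s j = of_nat j * a"
    and kink: "s (p + 2) = s (p + 1) + b" and kink_nonneg: "0 \<le> b" and kink_lt: "b < a"
    and copies: "a \<le> of_nat g * (a - b)" and mono: "mono s"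
begin

abbreviation score_without :: "nat set \<Rightarrow> rat" where
  "score_without E \<equiv> thiele_score s {1..<12*g+4} (thiele_ballot p g) (padding p \<union> E)"

abbreviation score_with :: "nat set \<Rightarrow> rat" where
  "score_with E \<equiv> thiele_score s {0..<12*g+4} (thiele_ballot p g) (padding p \<union> E)"

lemma score_increments: "s (Suc p) = s p + a" "s (Suc (Suc p)) = s p + a + b"
  using linear kink by (simp_all add: algebra_simps numeral_2_eq_2)

lemma copies_expanded: "a \<le> of_nat g * a - of_nat g * b"
  using copies by (simp add: algebra_simps)

lemma copies_pos: "1 \<le> g"
  using copies kink_lt kink_nonneg by (cases g) auto

lemma score_without_core:
  "E \<subseteq> {0..<5} \<Longrightarrow> score_without E =
     of_nat g * s (p + card ({0,2} \<inter> E)) + of_nat (2*g+1) * s (p + card ({0} \<inter> E))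
     + of_nat (3*g) * s (p + card ({1} \<inter> E)) + of_nat (g+1) * s (p + card ({2,3} \<inter> E))
     + of_nat (g+1) * s (p + card ({2,4} \<inter> E))
     + of_nat (2*g) * s (p + card ({3} \<inter> E)) + of_nat (2*g) * s (p + card ({4} \<inter> E))"
  using thiele_score_padding_core[of "padding p" p E s "{1..<12*g+4}" g]
    sum_core_ballots_from_1[of "\<lambda>B. s (p + card (B \<inter> E))" g] by simp

lemma score_with_core:
  "E \<subseteq> {0..<5} \<Longrightarrow> score_with E = s (p + card ({0,1} \<inter> E)) + score_without E"
proof -
  assume E: "E \<subseteq> {0..<5}"
  have "{0..<12*g+4} = insert 0 {1..<12*g+4}" by auto
  then have "score_with E = s (card (thiele_ballot p g 0 \<inter> (padding p \<union> E))) + score_without E"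
    by (simp add: thiele_score_insert_voter)
  moreover have "thiele_ballot p g 0 \<inter> (padding p \<union> E) = padding p \<union> ({0,1} \<inter> E)"
    using E by (auto simp: thiele_ballot_def core_ballot_def padding_def)
  moreover have "card (padding p \<union> ({0,1} \<inter> E)) = p + card ({0,1} \<inter> E)"
    using E by (intro card_padding_Un) auto
  ultimately show ?thesis by simp
qed

lemma without_voter_round1: "y \<in> {0,1,3,4} \<Longrightarrow> score_without {y} < score_without {2}"
  using score_without_core[of "{y}"] score_without_core[of "{2}"] copies_expanded copies_pos kink_nonneg kink_lt
  by (auto simp: score_increments algebra_simps)

lemma without_voter_round2:
  "score_without {0,2} \<le> score_without {1,2}"
  "y \<in> {3,4} \<Longrightarrow> score_without {y,2} < score_without {1,2}"
  using score_without_core[of "{0,2}"] score_without_core[of "{1,2}"] score_without_core[of "{y,2}"]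
    copies_expanded copies_pos kink_nonneg kink_lt
  by (auto simp: score_increments algebra_simps)

lemma without_voter_round3:
  "y \<in> {3,4} \<Longrightarrow> score_without {y,0,2} < score_without {1,0,2}"
  "y \<in> {3,4} \<Longrightarrow> score_without {y,1,2} < score_without {0,1,2}"
  using score_without_core[of "{y,0,2}"] score_without_core[of "{1,0,2}"]
    score_without_core[of "{y,1,2}"] score_without_core[of "{0,1,2}"] copies_expanded copies_pos kink_nonneg kink_lt
  by (auto simp: score_increments algebra_simps)

lemma with_voter_round1: "y \<in> {1,2,3,4} \<Longrightarrow> score_with {y} \<le> score_with {0}"
  using score_with_core[of "{y}"] score_with_core[of "{0}"]
    score_without_core[of "{y}"] score_without_core[of "{0}"] copies_expanded copies_pos kink_nonneg kink_lt
  by (auto simp: score_increments algebra_simps)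

lemma with_voter_round2: "y \<in> {1,2,4} \<Longrightarrow> score_with {y,0} \<le> score_with {3,0}"
  using score_with_core[of "{y,0}"] score_with_core[of "{3,0}"]
    score_without_core[of "{y,0}"] score_without_core[of "{3,0}"] copies_expanded copies_pos kink_nonneg kink_lt
  by (auto simp: score_increments algebra_simps)

lemma with_voter_round3: "y \<in> {1,2} \<Longrightarrow> score_with {y,3,0} \<le> score_with {4,3,0}"
  using score_with_core[of "{y,3,0}"] score_with_core[of "{4,3,0}"]
    score_without_core[of "{y,3,0}"] score_without_core[of "{4,3,0}"] copies_expanded copies_pos kink_nonneg kink_lt
  by (auto simp: score_increments algebra_simps)

lemma padding_beats_core:
  assumes "W \<subset> padding p" and "q \<in> padding p - W" and "x < 5"
  shows "thiele_score s {1..<12*g+4} (thiele_ballot p g) (insert x W)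
    < thiele_score s {1..<12*g+4} (thiele_ballot p g) (insert q W)"
proof -
  have finite: "finite W" using assms(1) by (meson finite_padding finite_subset psubset_imp_subset)
  have "card W < p" using psubset_card_mono[OF _ assms(1)] by simp
  then have increase: "s (card W) < s (card W + 1)"
    using linear kink_nonneg kink_lt by (simp add: algebra_simps)
  have "thiele_score s {1..<12*g+4} (thiele_ballot p g) (W \<union> {x})
      = (\<Sum>v\<in>{1..<12*g+4}. s (card W + card (core_ballot g v \<inter> {x})))"
    using assms by (intro thiele_score_padding_core) auto
  moreover have "thiele_score s {1..<12*g+4} (thiele_ballot p g) (insert q W \<union> {})
      = (\<Sum>v\<in>{1..<12*g+4}. s (card W + 1))"
    using assms finite by (subst thiele_score_padding_core) auto
  moreover have "(\<Sum>v\<in>{1..<12*g+4}. s (card W + card (core_ballot g v \<inter> {x})))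
      < (\<Sum>v\<in>{1..<12*g+4}. s (card W + 1))"
  proof (rule sum_strict_mono_ex1)
    show "\<forall>v\<in>{1..<12*g+4}. s (card W + card (core_ballot g v \<inter> {x})) \<le> s (card W + 1)"
    proof
      fix v
      have "card (core_ballot g v \<inter> {x}) \<le> 1" using card_mono[of "{x}"] by fastforce
      then show "s (card W + card (core_ballot g v \<inter> {x})) \<le> s (card W + 1)"
        using mono by (simp add: monoD)
    qed
    \<comment> \<open>Candidate 4 is not approved by voter 1, and candidates 0--3 not by the last voter.\<close>
    define v where "v = (if x = 4 then 1 else 12*g+3)"
    have "v \<in> {1..<12*g+4}" "x \<notin> core_ballot g v"
      using copies_pos assms(3) by (auto simp: v_def core_ballot_def)
    then show "\<exists>v\<in>{1..<12*g+4}. s (card W + card (core_ballot g v \<inter> {x})) < s (card W + 1)"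
      using increase by force
  qed simp
  ultimately show ?thesis by simp
qed

lemma without_voter_later_rounds:
  assumes "2 \<in> E" and "E \<subset> {0,1,2}" and "y \<in> {3,4}"
  shows "\<exists>z\<in>{0,1} - E. score_without (insert y E) < score_without (insert z E)"
proof -
  have "E = {2} \<or> E = {0,2} \<or> E = {1,2}"
    using assms(1,2) by (cases "0 \<in> E"; cases "1 \<in> E") auto
  then show ?thesis
  proof (elim disjE)
    assume "E = {2}"
    with without_voter_round2(2)[OF assms(3)] show ?thesis by (intro bexI[of _ 1]) auto
  next
    assume "E = {0,2}"
    with without_voter_round3(1)[OF assms(3)] show ?thesis by (intro bexI[of _ 1]) auto
  next
    assume "E = {1,2}"
    with without_voter_round3(2)[OF assms(3)] show ?thesis by (intro bexI[of _ 0]) auto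
  qed
qed

lemma thiele_without_voter_reachable:
  "thiele_partial s {0..<5+p} {1..<12*g+4} (thiele_ballot p g) W \<Longrightarrow> card W \<le> p + 3 \<Longrightarrow>
    W \<subseteq> padding p \<or> (\<exists>E. W = padding p \<union> E \<and> 2 \<in> E \<and> E \<subseteq> {0,1,2})"
proof (induction rule: thiele_partial.induct)
  case (thiele_step W x)
  let ?score = "thiele_score s {1..<12*g+4} (thiele_ballot p g)"
  have finite: "finite W" using thiele_partial_subset[OF thiele_step(1)] finite_subset by auto
  have x: "x \<in> {0..<5+p}" "x \<notin> W" using thiele_step(2) by auto
  have maximal: "?score (insert y W) \<le> ?score (insert x W)" if "y \<in> {0..<5+p} - W" for y
    using thiele_step(3) that by blast
  have "card W \<le> p + 3" using thiele_step.prems finite x by simp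
  with thiele_step.IH consider "W \<subset> padding p" | "W = padding p"
    | E where "W = padding p \<union> E" "2 \<in> E" "E \<subset> {0,1,2}" | "W = padding p \<union> {0,1,2}"
    by blast
  then show ?case
  proof cases
    case 1
    then obtain q where q: "q \<in> padding p - W" by blast
    have "x \<in> padding p"
    proof (rule ccontr)
      assume "x \<notin> padding p"
      then have "x < 5" using x by (auto simp: padding_def)
      from padding_beats_core[OF 1 q this] maximal[of q] q show False by (auto simp: padding_def)
    qed
    with 1 show ?thesis by blast
  next
    case 2
    then have "x < 5" using x by (auto simp: padding_def)
    moreover have "score_without {2} \<le> score_without {x}"
      using maximal[of 2] 2 by (auto simp: padding_def)
    ultimately have "x = 2" using without_voter_round1[of x] by fastforce
    with 2 show ?thesis by auto
  next
    case (3 E)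
    then have "x < 5" "x \<notin> E" using x by (auto simp: padding_def)
    have "x \<notin> {3,4}"
    proof
      assume "x \<in> {3,4}"
      then obtain z where z: "z \<in> {0,1} - E"
        and better: "score_without (insert x E) < score_without (insert z E)"
        using without_voter_later_rounds 3(2,3) by blast
      have "z \<in> {0..<5+p} - W" using z 3(1) by (auto simp: padding_def)
      from maximal[OF this] better 3(1) show False by simp
    qed
    with \<open>x < 5\<close> 3 show ?thesis by (intro disjI2 exI[of _ "insert x E"]) auto
  next
    case 4
    then have "card W = p + 3" using card_padding_Un[of "{0,1,2}" p] by simp
    with thiele_step.prems finite x show ?thesis by simp
  qed
qed simp

lemma thiele_partial_without_voter:
  "thiele_partial s {0..<5+p} {1..<12*g+4} (thiele_ballot p g) (padding p \<union> {0,1,2})"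
proof -
  have "thiele_partial s {0..<5+p} {1..<12*g+4} (thiele_ballot p g) (padding p \<union> {})"
    using mono by (intro thiele_partial_commonly_approved) (auto simp: thiele_ballot_def padding_def)
  then have "thiele_partial s {0..<5+p} {1..<12*g+4} (thiele_ballot p g) (padding p \<union> {2})"
    by (rule thiele_partial_padding_insert)
      (use without_voter_round1 less_5_cases in \<open>auto intro: less_imp_le\<close>)
  then have "thiele_partial s {0..<5+p} {1..<12*g+4} (thiele_ballot p g) (padding p \<union> {1,2})"
    by (rule thiele_partial_padding_insert)
      (use without_voter_round2 less_5_cases in \<open>auto intro: less_imp_le\<close>)
  then show ?thesis
    by (rule thiele_partial_padding_insert)
      (use without_voter_round3(2) less_5_cases in \<open>auto intro: less_imp_le\<close>)
qed

lemma thiele_partial_with_voter: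
  "thiele_partial s {0..<5+p} {0..<12*g+4} (thiele_ballot p g) (padding p \<union> {4,3,0})"
proof -
  have "thiele_partial s {0..<5+p} {0..<12*g+4} (thiele_ballot p g) (padding p \<union> {})"
    using mono by (intro thiele_partial_commonly_approved) (auto simp: thiele_ballot_def padding_def)
  then have "thiele_partial s {0..<5+p} {0..<12*g+4} (thiele_ballot p g) (padding p \<union> {0})"
    by (rule thiele_partial_padding_insert) (use with_voter_round1 less_5_cases in auto)
  then have "thiele_partial s {0..<5+p} {0..<12*g+4} (thiele_ballot p g) (padding p \<union> {3,0})"
    by (rule thiele_partial_padding_insert) (use with_voter_round2 less_5_cases in auto)
  then show ?thesis
    by (rule thiele_partial_padding_insert) (use with_voter_round3 less_5_cases in auto)
qed

lemma seq_thiele_outcome_without_voter: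
  assumes "W \<in> seq_thiele s {0..<5+p} {1..<12*g+4} (thiele_ballot p g) (p + 3)"
  shows "W = padding p \<union> {0,1,2}"
proof -
  have reachable: "thiele_partial s {0..<5+p} {1..<12*g+4} (thiele_ballot p g) W"
    and card: "card W = p + 3" using assms by (auto simp: seq_thiele_def)
  have "\<not> W \<subseteq> padding p" using card card_mono[of "padding p" W] by auto
  then obtain E where W: "W = padding p \<union> E" and E: "E \<subseteq> {0,1,2}"
    using thiele_without_voter_reachable[OF reachable] card by auto
  then have "E \<subseteq> {0..<5}" by auto
  then have "card E = card {0,1,2::nat}" using card W card_padding_Un[of E p] by simp
  with E have "E = {0,1,2}" by (intro card_subset_eq) auto
  with W show ?thesis by simp
qed

lemma seq_thiele_fails_participation_at_kink:
  "fails_participation (seq_thiele s :: nat set \<Rightarrow> nat set \<Rightarrow> (nat \<Rightarrow> nat set) \<Rightarrow> nat \<Rightarrow> nat set set)"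
proof (rule fails_participationI[where C = "{0..<5+p}" and N = "{0..<12*g+4}" and i = 0
      and A = "thiele_ballot p g" and k = "p + 3"
      and ?W\<^sub>0 = "padding p \<union> {0,1,2}" and W' = "padding p \<union> {4,3,0}"])
  show "is_profile {0..<5+p} {0..<12*g+4} (thiele_ballot p g)"
    using core_ballot_subset
    by (fastforce simp: is_profile_def thiele_ballot_def padding_def core_ballot_def)
  have without: "{0..<12*g+4} - {0} = {1..<12*g+4}" by auto
  show "\<forall>W\<in>seq_thiele s {0..<5+p} ({0..<12*g+4} - {0}) (thiele_ballot p g) (p + 3).
      thiele_ballot p g 0 \<subseteq> W"
    unfolding without using seq_thiele_outcome_without_voter
    by (auto simp: thiele_ballot_def core_ballot_def)
  show "padding p \<union> {0,1,2} \<in> seq_thiele s {0..<5+p} ({0..<12*g+4} - {0}) (thiele_ballot p g) (p + 3)"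
    unfolding without seq_thiele_def using thiele_partial_without_voter card_padding_Un[of "{0,1,2}" p]
    by simp
  show "padding p \<union> {4,3,0} \<in> seq_thiele s {0..<5+p} {0..<12*g+4} (thiele_ballot p g) (p + 3)"
    unfolding seq_thiele_def using thiele_partial_with_voter card_padding_Un[of "{4,3,0}" p]
    by simp
  show "\<not> thiele_ballot p g 0 \<subseteq> padding p \<union> {4,3,0}"
    by (auto simp: thiele_ballot_def core_ballot_def padding_def)
qed simp_all

end

theorem seq_thiele_fails_participation:
  fixes s :: "nat \<Rightarrow> rat"
  assumes "s 0 = 0" "0 < s 1" "mono s" "\<forall>x. s (x + 2) - s (x + 1) \<le> s (x + 1) - s x"
    and "\<not> (\<exists>\<alpha>. \<forall>x. s x = \<alpha> * of_nat x)"
  shows "fails_participation (seq_thiele s :: nat set \<Rightarrow> nat set \<Rightarrow> (nat \<Rightarrow> nat set) \<Rightarrow> nat \<Rightarrow> nat set set)"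
proof -
  obtain p b where linear: "\<forall>j\<le>p+1. s j = of_nat j * s 1" and kink: "s (p + 2) = s (p + 1) + b"
    and "0 \<le> b" "b < s 1"
    using concave_score_first_kink[OF assms(1,3-5)] by blast
  obtain g :: nat where "s 1 / (s 1 - b) \<le> of_nat g" using real_arch_simple by blast
  with \<open>b < s 1\<close> have "s 1 \<le> of_nat g * (s 1 - b)" by (simp add: divide_le_eq)
  from seq_thiele_fails_participation_at_kink[OF linear kink \<open>0 \<le> b\<close> \<open>b < s 1\<close> this \<open>mono s\<close>]
  show ?thesis .
qed

section \<open>Sequential Phragmen\<close>

lemma phrag_partial_subset: "phrag_partial C N A W y \<Longrightarrow> W \<subseteq> C"
  by (induction rule: phrag_partial.induct) auto

lemma phrag_stepI:
  assumes "phrag_partial C N A W y" and "x \<in> C - W"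
    and "\<forall>c\<in>C - W. supporters N A c \<noteq> {} \<longrightarrow>
      supporters N A x \<noteq> {} \<and> phrag_load N A y x \<le> phrag_load N A y c"
    and "\<And>i. y' i = (if i \<in> supporters N A x then phrag_load N A y x else y i)"
  shows "phrag_partial C N A (insert x W) y'"
proof -
  have "y' = (\<lambda>i. if i \<in> supporters N A x then phrag_load N A y x else y i)" using assms(4) by auto
  with phrag_step[OF assms(1-3)] show ?thesis by simp
qed

definition phragmen_ballot :: "nat \<Rightarrow> nat set" where
  "phragmen_ballot v =
     (if v = 0 then {0,2} else if v = 1 then {0,1} else if v = 2 then {0,3} else if v = 3 then {0,1,3}
      else if v = 4 then {2,3} else if v = 5 then {2,3} else {0,1,3})"

lemma phragmen_without_voter_reachable:
  "phrag_partial {0,1,2,3} {1,2,3,4,5,6} phragmen_ballot W y \<Longrightarrow> card W \<le> 3 \<Longrightarrow>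
    (W = {} \<and> y = (\<lambda>_. 0)) \<or>
    (W = {3} \<and> y = (\<lambda>i. if i \<in> {2,3,4,5,6} then 1/5 else 0)) \<or>
    (W = {0,3} \<and> y = (\<lambda>i. if i \<in> {1,2,3,6} then 2/5 else if i \<in> {4,5} then 1/5 else 0)) \<or>
    W = {0,2,3}"
proof (induction rule: phrag_partial.induct)
  case (phrag_step W y x)
  let ?N = "{1,2,3,4,5,6} :: nat set"
  let ?load = "phrag_load ?N phragmen_ballot y"
  have x: "x \<in> {0,1,2,3}" "x \<notin> W" using phrag_step(2) by auto
  have minimal: "?load x \<le> ?load c"
    if "c \<in> {0,1,2,3} - W" "supporters ?N phragmen_ballot c \<noteq> {}" for c
    using phrag_step(3) that by blast
  have "finite W" using phrag_partial_subset[OF phrag_step(1)] finite_subset by auto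
  then have "card W \<le> 3" using phrag_step.prems x by simp
  with phrag_step.IH consider
      (empty) "W = {}" "y = (\<lambda>_. 0)"
    | (one) "W = {3}" "y = (\<lambda>i. if i \<in> {2,3,4,5,6} then 1/5 else 0)"
    | (two) "W = {0,3}" "y = (\<lambda>i. if i \<in> {1,2,3,6} then 2/5 else if i \<in> {4,5} then 1/5 else 0)"
    | (three) "W = {0,2,3}" by blast
  then show ?case
  proof cases
    case empty
    then have "?load x \<le> ?load 3" using minimal[of 3] by (simp add: phragmen_ballot_def)
    then have "x = 3" using x empty by (auto simp: phrag_load_def phragmen_ballot_def)
    with empty show ?thesis by (auto simp: phrag_load_def phragmen_ballot_def)
  next
    case one
    then have "?load x \<le> ?load 0" using minimal[of 0] by (simp add: phragmen_ballot_def)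
    then have x0: "x = 0" using x one by (auto simp: phrag_load_def phragmen_ballot_def)
    have "?load 0 = 2/5" using one by (simp add: phrag_load_def phragmen_ballot_def)
    then have "(\<lambda>i. if i \<in> supporters ?N phragmen_ballot x then ?load x else y i) =
       (\<lambda>i. if i \<in> {1,2,3,6} then 2/5 else if i \<in> {4,5} then 1/5 else 0)"
      using one x0 by (auto simp: phragmen_ballot_def)
    with one x0 show ?thesis by auto
  next
    case two
    then have "?load x \<le> ?load 2" using minimal[of 2] by (simp add: phragmen_ballot_def)
    then have "x = 2" using x two by (auto simp: phrag_load_def phragmen_ballot_def)
    with two show ?thesis by auto
  next
    case three
    with phrag_step.prems x show ?thesis by simp
  qed
qed simp

lemma phrag_partial_without_voter: "\<exists>y. phrag_partial {0,1,2,3} {1,2,3,4,5,6} phragmen_ballot {2,0,3} y"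
proof -
  let ?C = "{0,1,2,3} :: nat set" and ?N = "{1,2,3,4,5,6} :: nat set"
  have "phrag_partial ?C ?N phragmen_ballot {3} (\<lambda>i. if i \<in> {2,3,4,5,6} then 1/5 else 0)"
    by (rule phrag_stepI[OF phrag_init]) (auto simp: phrag_load_def phragmen_ballot_def)
  then have "phrag_partial ?C ?N phragmen_ballot {0,3}
      (\<lambda>i. if i \<in> {1,2,3,6} then 2/5 else if i \<in> {4,5} then 1/5 else 0)"
    by (rule phrag_stepI) (auto simp: phrag_load_def phragmen_ballot_def)
  then have "phrag_partial ?C ?N phragmen_ballot {2,0,3}
      (\<lambda>i. if i \<in> {4,5} then 7/10 else if i \<in> {1,2,3,6} then 2/5 else 0)"
    by (rule phrag_stepI) (auto simp: phrag_load_def phragmen_ballot_def)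
  then show ?thesis by blast
qed

lemma phrag_partial_with_voter: "\<exists>y. phrag_partial {0,1,2,3} {0,1,2,3,4,5,6} phragmen_ballot {1,3,0} y"
proof -
  let ?C = "{0,1,2,3} :: nat set" and ?N = "{0,1,2,3,4,5,6} :: nat set"
  have "phrag_partial ?C ?N phragmen_ballot {0} (\<lambda>i. if i \<in> {0,1,2,3,6} then 1/5 else 0)"
    by (rule phrag_stepI[OF phrag_init]) (auto simp: phrag_load_def phragmen_ballot_def)
  then have "phrag_partial ?C ?N phragmen_ballot {3,0}
      (\<lambda>i. if i \<in> {2,3,4,5,6} then 8/25 else if i \<in> {0,1} then 1/5 else 0)"
    by (rule phrag_stepI) (auto simp: phrag_load_def phragmen_ballot_def)
  then have "phrag_partial ?C ?N phragmen_ballot {1,3,0}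
      (\<lambda>i. if i \<in> {1,3,6} then 46/75 else if i \<in> {2,4,5} then 8/25 else if i = 0 then 1/5 else 0)"
    by (rule phrag_stepI) (auto simp: phrag_load_def phragmen_ballot_def)
  then show ?thesis by blast
qed

theorem seq_phragmen_fails_participation:
  "fails_participation (seq_phragmen :: nat set \<Rightarrow> nat set \<Rightarrow> (nat \<Rightarrow> nat set) \<Rightarrow> nat \<Rightarrow> nat set set)"
proof (rule fails_participationI[where C = "{0,1,2,3}" and N = "{0,1,2,3,4,5,6}" and i = 0
      and A = phragmen_ballot and k = 3 and ?W\<^sub>0 = "{2,0,3}" and W' = "{1,3,0}"])
  have without: "{0,1,2,3,4,5,6} - {0} = {1,2,3,4,5,6 :: nat}" by auto
  show "\<forall>W\<in>seq_phragmen {0,1,2,3} ({0,1,2,3,4,5,6} - {0}) phragmen_ballot 3. phragmen_ballot 0 \<subseteq> W"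
    unfolding without seq_phragmen_def
    using phragmen_without_voter_reachable by (fastforce simp: phragmen_ballot_def)
  show "{2,0,3} \<in> seq_phragmen {0,1,2,3} ({0,1,2,3,4,5,6} - {0}) phragmen_ballot 3"
    unfolding without seq_phragmen_def using phrag_partial_without_voter by simp
  show "{1,3,0} \<in> seq_phragmen {0,1,2,3} {0,1,2,3,4,5,6} phragmen_ballot 3"
    unfolding seq_phragmen_def using phrag_partial_with_voter by simp
qed (auto simp: is_profile_def phragmen_ballot_def)

section \<open>Method of equal shares\<close>

lemma mes_rho_eqI:
  assumes "finite S" and "0 \<le> r" and "(\<Sum>i\<in>S. min r (x i)) = 1" and "\<exists>i\<in>S. r \<le> x i"
  shows "mes_rho x S = r"
  unfolding mes_rho_def
proof (rule cInf_eq_minimum)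
  show "r \<in> {r. 0 \<le> r \<and> (\<Sum>i\<in>S. min r (x i)) = 1}" using assms(2,3) by simp
  fix r' assume "r' \<in> {r. 0 \<le> r \<and> (\<Sum>i\<in>S. min r (x i)) = 1}"
  then have r': "(\<Sum>i\<in>S. min r' (x i)) = 1" by simp
  show "r \<le> r'"
  proof (rule ccontr)
    assume "\<not> r \<le> r'"
    \<comment> \<open>A smaller rate pays strictly less to a supporter whose budget is at least r.\<close>
    then have "(\<Sum>i\<in>S. min r' (x i)) < (\<Sum>i\<in>S. min r (x i))"
    proof (intro sum_strict_mono_ex1[OF assms(1)])
      show "\<forall>i\<in>S. min r' (x i) \<le> min r (x i)" using \<open>\<not> r \<le> r'\<close> by auto
      from assms(4) obtain i where "i \<in> S" "r \<le> x i" by blast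
      with \<open>\<not> r \<le> r'\<close> show "\<exists>i\<in>S. min r' (x i) < min r (x i)" by (intro bexI[of _ i]) auto
    qed
    with r' assms(3) show False by simp
  qed
qed

lemma mes_partial_subset: "mes_partial C N A k W x b \<Longrightarrow> W \<subseteq> C"
  by (induction rule: mes_partial.induct) auto

lemma mes_phase1I:
  assumes "mes_partial C N A k W x False" and "c \<in> C - W" and "mes_affordable N A x c"
    and "\<forall>d\<in>C - W. mes_affordable N A x d \<longrightarrow> mes_rho x (supporters N A c) \<le> mes_rho x (supporters N A d)"
    and "\<And>i. x' i = (if i \<in> supporters N A c then x i - min (mes_rho x (supporters N A c)) (x i) else x i)"
  shows "mes_partial C N A k (insert c W) x' False"
proof -
  have "x' = (\<lambda>i. if i \<in> supporters N A c then x i - min (mes_rho x (supporters N A c)) (x i) else x i)"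
    using assms(5) by auto
  with mes_phase1[OF assms(1-4)] show ?thesis by simp
qed

definition mes_ballot :: "nat \<Rightarrow> nat set" where
  "mes_ballot v =
     (if v = 0 then {1,3} else if v = 1 then {0,3} else if v = 2 then {1,2} else if v = 3 then {0,2}
      else if v = 4 then {0,3} else if v = 5 then {1,3} else if v = 6 then {1,2} else {0})"

lemma mes_rho_without_voter:
  "mes_rho (\<lambda>_. 3/7) (supporters {1,2,3,4,5,6,7} mes_ballot 0) = 1/4"
  "mes_rho (\<lambda>_. 3/7) (supporters {1,2,3,4,5,6,7} mes_ballot 1) = 1/3"
  "mes_rho (\<lambda>_. 3/7) (supporters {1,2,3,4,5,6,7} mes_ballot 2) = 1/3"
  "mes_rho (\<lambda>_. 3/7) (supporters {1,2,3,4,5,6,7} mes_ballot 3) = 1/3"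
  "mes_rho (\<lambda>i. if i \<in> {1,3,4,7} then 5/28 else 3/7) (supporters {1,2,3,4,5,6,7} mes_ballot 1) = 1/3"
  "mes_rho (\<lambda>i. if i \<in> {1,3,4,7} then 5/28 else 3/7) (supporters {1,2,3,4,5,6,7} mes_ballot 2) = 23/56"
  by (rule mes_rho_eqI; auto simp: mes_ballot_def)+

lemma mes_rho_with_voter:
  "mes_rho (\<lambda>_. 3/8) (supporters {0,1,2,3,4,5,6,7} mes_ballot 0) = 1/4"
  "mes_rho (\<lambda>_. 3/8) (supporters {0,1,2,3,4,5,6,7} mes_ballot 1) = 1/4"
  "mes_rho (\<lambda>_. 3/8) (supporters {0,1,2,3,4,5,6,7} mes_ballot 2) = 1/3"
  "mes_rho (\<lambda>_. 3/8) (supporters {0,1,2,3,4,5,6,7} mes_ballot 3) = 1/4"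
  "mes_rho (\<lambda>i. if i \<in> {0,1,4,5} then 1/8 else 3/8) (supporters {0,1,2,3,4,5,6,7} mes_ballot 0) = 3/8"
  "mes_rho (\<lambda>i. if i \<in> {0,1,4,5} then 1/8 else 3/8) (supporters {0,1,2,3,4,5,6,7} mes_ballot 1) = 3/8"
  "mes_rho (\<lambda>i. if i \<in> {0,1,4,5} then 1/8 else 3/8) (supporters {0,1,2,3,4,5,6,7} mes_ballot 2) = 1/3"
  by (rule mes_rho_eqI; auto simp: mes_ballot_def)+

lemma mes_without_voter_first_purchase:
  assumes "c \<in> {0,1,2,3}"
    and "\<forall>d\<in>{0,1,2,3}. mes_affordable {1,2,3,4,5,6,7} mes_ballot (\<lambda>_. 3/7) d \<longrightarrow>
      mes_rho (\<lambda>_. 3/7) (supporters {1,2,3,4,5,6,7} mes_ballot c)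
        \<le> mes_rho (\<lambda>_. 3/7) (supporters {1,2,3,4,5,6,7} mes_ballot d)"
  shows "c = 0"
proof -
  have "mes_affordable {1,2,3,4,5,6,7} mes_ballot (\<lambda>_. 3/7) 0"
    by (simp add: mes_affordable_def mes_ballot_def)
  with assms show ?thesis using mes_rho_without_voter(1-4) by auto
qed

lemma mes_without_voter_second_purchase:
  assumes "c \<in> {1,2,3}" and "mes_affordable {1,2,3,4,5,6,7} mes_ballot x c"
    and "\<forall>d\<in>{1,2,3}. mes_affordable {1,2,3,4,5,6,7} mes_ballot x d \<longrightarrow>
      mes_rho x (supporters {1,2,3,4,5,6,7} mes_ballot c) \<le> mes_rho x (supporters {1,2,3,4,5,6,7} mes_ballot d)"
    and "x = (\<lambda>i. if i \<in> {1,3,4,7} then 5/28 else 3/7)"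
  shows "c = 1"
proof -
  have "mes_affordable {1,2,3,4,5,6,7} mes_ballot x 1" "\<not> mes_affordable {1,2,3,4,5,6,7} mes_ballot x 3"
    using assms(4) by (simp_all add: mes_affordable_def mes_ballot_def)
  with assms show ?thesis using mes_rho_without_voter(5,6) by auto
qed

lemma mes_without_voter_reachable:
  "mes_partial {0,1,2,3} {1,2,3,4,5,6,7} mes_ballot 3 W x b \<Longrightarrow> card W \<le> 3 \<Longrightarrow>
    (W = {} \<and> x = (\<lambda>_. 3/7) \<and> \<not> b) \<or>
    (W = {0} \<and> x = (\<lambda>i. if i \<in> {1,3,4,7} then 5/28 else 3/7) \<and> \<not> b) \<or>
    (W = {0,1} \<and> x = (\<lambda>i. if i \<in> {1,3,4,7} then 5/28 else if i \<in> {2,5,6} then 2/21 else 3/7)) \<or>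
    W = {0,1,3}"
proof (induction rule: mes_partial.induct)
  case (mes_phase1 W x c)
  let ?N = "{1,2,3,4,5,6,7} :: nat set"
  have c: "c \<in> {0,1,2,3}" "c \<notin> W" using mes_phase1(2) by auto
  have "finite W" using mes_partial_subset[OF mes_phase1(1)] finite_subset by auto
  then have "card W \<le> 3" using mes_phase1.prems c by simp
  with mes_phase1.IH consider
      (empty) "W = {}" "x = (\<lambda>_. 3/7)"
    | (one) "W = {0}" "x = (\<lambda>i. if i \<in> {1,3,4,7} then 5/28 else 3/7)"
    | (two) "W = {0,1}" "x = (\<lambda>i. if i \<in> {1,3,4,7} then 5/28 else if i \<in> {2,5,6} then 2/21 else 3/7)"
    | (three) "W = {0,1,3}" by blast
  then show ?case
  proof cases
    case empty
    then have "c = 0" using c mes_phase1(4) by (intro mes_without_voter_first_purchase) auto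
    moreover have "mes_rho x (supporters ?N mes_ballot 0) = 1/4"
      using empty mes_rho_without_voter(1) by simp
    ultimately show ?thesis using empty by (auto simp: mes_ballot_def)
  next
    case one
    then have "c = 1" using c mes_phase1(3,4) by (intro mes_without_voter_second_purchase) auto
    moreover have "mes_rho x (supporters ?N mes_ballot 1) = 1/3"
      using one mes_rho_without_voter(5) by simp
    ultimately show ?thesis using one by (auto simp: mes_ballot_def)
  next
    case two
    then have "\<not> mes_affordable ?N mes_ballot x 2" "\<not> mes_affordable ?N mes_ballot x 3"
      by (simp_all add: mes_affordable_def mes_ballot_def)
    with c two mes_phase1(3) show ?thesis by auto
  next
    case three
    with mes_phase1.prems c show ?thesis by simp
  qed
next
  case (mes_switch W x)
  have "mes_affordable {1,2,3,4,5,6,7} mes_ballot (\<lambda>_. 3/7) 0"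
    "mes_affordable {1,2,3,4,5,6,7} mes_ballot (\<lambda>i. if i \<in> {1,3,4,7} then 5/28 else 3/7) 1"
    by (simp_all add: mes_affordable_def mes_ballot_def)
  with mes_switch show ?case by auto
next
  case (mes_phase2 W x c)
  let ?N = "{1,2,3,4,5,6,7} :: nat set"
  have c: "c \<in> {0,1,2,3}" "c \<notin> W" using mes_phase2(2) by auto
  have "finite W" using mes_partial_subset[OF mes_phase2(1)] finite_subset by auto
  then have "card W \<le> 3" using mes_phase2.prems c by simp
  with mes_phase2.IH consider
      (two) "W = {0,1}" "x = (\<lambda>i. if i \<in> {1,3,4,7} then 5/28 else if i \<in> {2,5,6} then 2/21 else 3/7)"
    | (three) "W = {0,1,3}" by auto
  then show ?case
  proof cases
    case two
    have "3 \<in> {0,1,2,3} - W" "supporters ?N mes_ballot 3 \<noteq> {}"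
      using two by (auto simp: mes_ballot_def)
    with mes_phase2(4) have "mes_time ?N mes_ballot x c \<le> mes_time ?N mes_ballot x 3" by blast
    then have "c = 3" using c two by (auto simp: mes_time_def mes_ballot_def)
    with two show ?thesis by auto
  next
    case three
    with mes_phase2.prems c show ?thesis by simp
  qed
qed simp

lemma mes_partial_without_voter: "\<exists>x b. mes_partial {0,1,2,3} {1,2,3,4,5,6,7} mes_ballot 3 {3,1,0} x b"
proof -
  let ?C = "{0,1,2,3} :: nat set" and ?N = "{1,2,3,4,5,6,7} :: nat set"
  let ?x1 = "(\<lambda>i. if i \<in> {1,3,4,7} then 5/28 else 3/7) :: nat \<Rightarrow> real"
  let ?x2 = "(\<lambda>i. if i \<in> {1,3,4,7} then 5/28 else if i \<in> {2,5,6} then 2/21 else 3/7) :: nat \<Rightarrow> real"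
  have "mes_partial ?C ?N mes_ballot 3 {} (\<lambda>_. 3/7) False"
    using mes_init[of ?C ?N mes_ballot 3] by simp
  then have "mes_partial ?C ?N mes_ballot 3 {0} ?x1 False"
    by (rule mes_phase1I)
      (use mes_rho_without_voter in \<open>auto simp: mes_affordable_def mes_ballot_def\<close>)
  then have "mes_partial ?C ?N mes_ballot 3 {1,0} ?x2 False"
    by (rule mes_phase1I)
      (use mes_rho_without_voter in \<open>auto simp: mes_affordable_def mes_ballot_def\<close>)
  then have "mes_partial ?C ?N mes_ballot 3 {1,0} ?x2 True"
    by (rule mes_switch) (auto simp: mes_affordable_def mes_ballot_def)
  then have "mes_partial ?C ?N mes_ballot 3 {3,1,0}
      (\<lambda>i. if i \<in> supporters ?N mes_ballot 3 then 0 else ?x2 i + mes_time ?N mes_ballot ?x2 3) True"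
    by (rule mes_phase2) (auto simp: mes_time_def mes_ballot_def)
  then show ?thesis by blast
qed

lemma mes_partial_with_voter: "\<exists>x b. mes_partial {0,1,2,3} {0,1,2,3,4,5,6,7} mes_ballot 3 {0,2,3} x b"
proof -
  let ?C = "{0,1,2,3} :: nat set" and ?N = "{0,1,2,3,4,5,6,7} :: nat set"
  let ?x1 = "(\<lambda>i. if i \<in> {0,1,4,5} then 1/8 else 3/8) :: nat \<Rightarrow> real"
  let ?x2 = "(\<lambda>i. if i \<in> {2,3,6} then 1/24 else if i \<in> {0,1,4,5} then 1/8 else 3/8) :: nat \<Rightarrow> real"
  have "mes_partial ?C ?N mes_ballot 3 {} (\<lambda>_. 3/8) False"
    using mes_init[of ?C ?N mes_ballot 3] by simp
  then have "mes_partial ?C ?N mes_ballot 3 {3} ?x1 False"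
    by (rule mes_phase1I)
      (use mes_rho_with_voter in \<open>auto simp: mes_affordable_def mes_ballot_def\<close>)
  then have "mes_partial ?C ?N mes_ballot 3 {2,3} ?x2 False"
    by (rule mes_phase1I)
      (use mes_rho_with_voter in \<open>auto simp: mes_affordable_def mes_ballot_def\<close>)
  then have "mes_partial ?C ?N mes_ballot 3 {2,3} ?x2 True"
    by (rule mes_switch) (auto simp: mes_affordable_def mes_ballot_def)
  then have "mes_partial ?C ?N mes_ballot 3 {0,2,3}
      (\<lambda>i. if i \<in> supporters ?N mes_ballot 0 then 0 else ?x2 i + mes_time ?N mes_ballot ?x2 0) True"
    by (rule mes_phase2) (auto simp: mes_time_def mes_ballot_def)
  then show ?thesis by blast
qed

theorem equal_shares_fails_participation:
  "fails_participation (equal_shares :: nat set \<Rightarrow> nat set \<Rightarrow> (nat \<Rightarrow> nat set) \<Rightarrow> nat \<Rightarrow> nat set set)"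
proof (rule fails_participationI[where C = "{0,1,2,3}" and N = "{0,1,2,3,4,5,6,7}" and i = 0
      and A = mes_ballot and k = 3 and ?W\<^sub>0 = "{3,1,0}" and W' = "{0,2,3}"])
  have without: "{0,1,2,3,4,5,6,7} - {0} = {1,2,3,4,5,6,7 :: nat}" by auto
  show "\<forall>W\<in>equal_shares {0,1,2,3} ({0,1,2,3,4,5,6,7} - {0}) mes_ballot 3. mes_ballot 0 \<subseteq> W"
    unfolding without equal_shares_def
    using mes_without_voter_reachable by (fastforce simp: mes_ballot_def)
  show "{3,1,0} \<in> equal_shares {0,1,2,3} ({0,1,2,3,4,5,6,7} - {0}) mes_ballot 3"
    unfolding without equal_shares_def using mes_partial_without_voter by simp
  show "{0,2,3} \<in> equal_shares {0,1,2,3} {0,1,2,3,4,5,6,7} mes_ballot 3"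
    unfolding equal_shares_def using mes_partial_with_voter by simp
qed (auto simp: is_profile_def mes_ballot_def)

theorem corollary1:
  shows "(\<forall>s :: nat \<Rightarrow> rat.
            s 0 = 0 \<and> 0 < s 1 \<and> mono s \<and>
            (\<forall>x. s (x + 2) - s (x + 1) \<le> s (x + 1) - s x) \<and>
            \<not> (\<exists>\<alpha>. \<forall>x. s x = \<alpha> * of_nat x)
            \<longrightarrow> fails_participation
                  (seq_thiele s :: nat set \<Rightarrow> nat set \<Rightarrow> (nat \<Rightarrow> nat set) \<Rightarrow> nat \<Rightarrow> nat set set))
       \<and> fails_participation
           (seq_phragmen :: nat set \<Rightarrow> nat set \<Rightarrow> (nat \<Rightarrow> nat set) \<Rightarrow> nat \<Rightarrow> nat set set)
       \<and> fails_participation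
           (equal_shares :: nat set \<Rightarrow> nat set \<Rightarrow> (nat \<Rightarrow> nat set) \<Rightarrow> nat \<Rightarrow> nat set set)"
  using seq_thiele_fails_participation seq_phragmen_fails_participation
    equal_shares_fails_participation
  by blast

end
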